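(* Let $A\in\mathbb{Z}^{d\times n}$ have rank $d$, and let $B^{(0)}$ be the nonsingular matrix chosen in step 1 of the Basic Generalized Euclidean Algorithm. Each exchange step (the "otherwise" branch) replaces the current basis matrix $B$ by a matrix $B'$ with $|\det B'|\le \tfrac12|\det B|$. Consequently the algorithm performs at most $\log_2|\det B^{(0)}|$ exchange steps.
   Context: For real $y$, $\lfloor y\rceil:=\lfloor y+1/2\rfloor$. Basic Generalized Euclidean Algorithm. Input: $A=(A_1,\dots,A_n)\in\mathbb{Z}^{d\times n}$ of rank $d$. 1. Choose $d$ linearly independent columns of $A$ and let $B=(B_1,\dots,B_d)$ be the matrix they form. Let $C$ be the multiset of the remaining $n-d$ columns. 2. While $C\neq\emptyset$: - choose any $c\in C$ and compute $x\in\mathbb{Q}^d$ with $Bx=c$; - if $x\in\mathbb{Z}^d$, remove $c$ from $C$; - otherwise (exchange step) choose an index $\ell$ with $x_\ell\notin\mathbb{Z}$, remove $c$ from $C$, add the current column $B_\ell$ to $C$, and replace the column $B_\ell$ by $c-\bigl(B_\ell\lfloor x_\ell\rceil+\sum_{j\neq\ell}B_j\lfloor x_j\rfloor\bigr)$. 3. Return $B$. *)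

theory Defs
  imports "HOL-Analysis.Analysis" "HOL-Library.Multiset"
begin

definition round_half :: "rat \<Rightarrow> int" where
  "round_half y = \<lfloor>y + 1/2\<rfloor>"

definition ratmat :: "int^'n^'m \<Rightarrow> rat^'n^'m" where
  "ratmat A = (\<chi> i j. of_int (A$i$j))"

definition ratvec :: "int^'m \<Rightarrow> rat^'m" where
  "ratvec v = (\<chi> i. of_int (v$i))"

definition upd_col :: "int^'d^'d \<Rightarrow> 'd \<Rightarrow> int^'d \<Rightarrow> int^'d^'d" where
  "upd_col B l v = (\<chi> i k. if k = l then v$i else B$i$k)"

type_synonym 'd gea_state = "(int^'d^'d) \<times> ((int^'d) multiset)"

text \<open>Step 1: choose d linearly independent columns (indexed injectively by sigma),
  remaining columns form the multiset C.\<close>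
definition gea_init :: "int^'n^'d::finite \<Rightarrow> 'd gea_state \<Rightarrow> bool" where
  "gea_init A s \<longleftrightarrow> (\<exists>\<sigma> :: 'd \<Rightarrow> 'n. inj \<sigma> \<and>
      rank (ratmat (\<chi> i k. A$i$(\<sigma> k))) = CARD('d) \<and>
      fst s = (\<chi> i k. A$i$(\<sigma> k)) \<and>
      snd s = image_mset (\<lambda>j. column j A) (mset_set (UNIV - range \<sigma>)))"

definition gea_plain_step :: "'d::finite gea_state \<Rightarrow> 'd gea_state \<Rightarrow> bool" where
  "gea_plain_step s s' \<longleftrightarrow> (\<exists>c x. c \<in># snd s \<and> ratmat (fst s) *v x = ratvec c \<and>
      (\<forall>j. x$j \<in> \<int>) \<and> s' = (fst s, snd s - {#c#}))"

definition gea_exchange_step :: "'d::finite gea_state \<Rightarrow> 'd gea_state \<Rightarrow> bool" where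
  "gea_exchange_step s s' \<longleftrightarrow> (\<exists>c x l. c \<in># snd s \<and> ratmat (fst s) *v x = ratvec c \<and>
      x$l \<notin> \<int> \<and>
      s' = (upd_col (fst s) l
              (c - (of_int (round_half (x$l)) *s column l (fst s)
                    + (\<Sum>j\<in>UNIV - {l}. of_int \<lfloor>x$j\<rfloor> *s column j (fst s)))),
            snd s - {#c#} + {#column l (fst s)#}))"

definition gea_step :: "'d::finite gea_state \<Rightarrow> 'd gea_state \<Rightarrow> bool" where
  "gea_step s s' \<longleftrightarrow> gea_plain_step s s' \<or> gea_exchange_step s s'"

end

theory Submission
  imports Defs
begin

text \<open>Write the current basis as \<open>B\<close> and \<open>c = B x\<close>. An exchange step replaces column \<open>l\<close>
  of \<open>B\<close> by \<open>c - B y\<close>, where \<open>y\<close> is the integer vector obtained by rounding \<open>x\<close> (to the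
  nearest integer in coordinate \<open>l\<close>, downwards elsewhere). By Cramer's rule the new determinant
  is \<open>(x\<^sub>l - y\<^sub>l) det B\<close>, and \<open>0 < |x\<^sub>l - y\<^sub>l| \<le> 1/2\<close> because \<open>x\<^sub>l\<close> is not an integer.
  So the nonzero integer \<open>|det B|\<close> at least halves in every exchange step and is unchanged
  otherwise, which allows at most \<open>log\<^sub>2 |det B\<^sub>0|\<close> exchange steps.\<close>

lemma det_ratmat: "det (ratmat B) = (of_int (det B) :: rat)"
  unfolding det_def ratmat_def by (simp add: of_int_sum of_int_prod)

lemma ratvec_matrix_vector_mult: "ratvec (B *v y) = ratmat B *v ratvec y"
  unfolding ratvec_def ratmat_def matrix_vector_mult_def by (simp add: of_int_sum vec_eq_iff)

lemma ratvec_diff: "ratvec (a - b) = ratvec a - ratvec b"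
  unfolding ratvec_def by (simp add: vec_eq_iff)

lemma det_nz_if_full_rank:
  fixes B :: "'a::field^'d::finite^'d"
  assumes "rank B = CARD('d)"
  shows "det B \<noteq> 0"
proof -
  have "vec.dim (rows B) = CARD('d)"
    using assms by (simp add: row_rank_def_gen)
  moreover have "vec.dim (UNIV :: ('a^'d) set) = CARD('d)"
    by (rule vec_dim_card)
  ultimately have "vec.span (rows B) = UNIV"
    using vec.subspace_dim_equal[of "vec.span (rows B)" UNIV]
    by (simp add: vec.subspace_span vec.subspace_UNIV vec.dim_span)
  then have "invertible B"
    using matrix_left_invertible_span_rows_gen invertible_left_inverse by blast
  then show ?thesis
    using invertible_det_nz by blast
qed

lemma abs_sub_round_half_le: "\<bar>x - of_int (round_half x)\<bar> \<le> 1/2"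
  using floor_correct[of "x + 1/2"] unfolding round_half_def by linarith

lemma sub_round_half_nz: "x \<notin> \<int> \<Longrightarrow> x - of_int (round_half x) \<noteq> 0"
  by (metis Ints_of_int eq_iff_diff_eq_0)

lemma det_upd_col_residual:
  assumes "ratmat B *v x = ratvec c"
  shows "(of_int (det (upd_col B l (c - B *v y))) :: rat) = (x - ratvec y) $ l * of_int (det B)"
proof -
  have "ratmat B *v (x - ratvec y) = ratvec (c - B *v y)"
    using assms by (simp add: matrix_vector_mult_diff_distrib ratvec_matrix_vector_mult ratvec_diff)
  then have "ratmat (upd_col B l (c - B *v y))
      = (\<chi> i j. if j = l then (ratmat B *v (x - ratvec y)) $ i else ratmat B $ i $ j)"
    by (simp add: vec_eq_iff ratmat_def upd_col_def ratvec_def)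
  then show ?thesis
    using cramer_lemma[of l "ratmat B" "x - ratvec y"] by (simp flip: det_ratmat)
qed

lemma exchange_step_det:
  fixes s s' :: "'d::finite gea_state"
  assumes "gea_exchange_step s s'"
  obtains t :: rat where "t \<noteq> 0" "\<bar>t\<bar> \<le> 1/2" "of_int (det (fst s')) = t * of_int (det (fst s))"
proof -
  obtain c x l where cx: "ratmat (fst s) *v x = ratvec c" and nonint: "x $ l \<notin> \<int>"
    and s': "fst s' = upd_col (fst s) l
              (c - (of_int (round_half (x $ l)) *s column l (fst s)
                    + (\<Sum>j\<in>UNIV - {l}. of_int \<lfloor>x $ j\<rfloor> *s column j (fst s))))"
    using assms unfolding gea_exchange_step_def by auto
  define y :: "int^'d" where "y = (\<chi> j. if j = l then round_half (x $ l) else \<lfloor>x $ j\<rfloor>)"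
  have "fst s *v y = y $ l *s column l (fst s) + (\<Sum>j\<in>UNIV - {l}. y $ j *s column j (fst s))"
    by (simp add: matrix_mult_sum sum.remove)
  then have "fst s' = upd_col (fst s) l (c - fst s *v y)"
    by (simp add: s' y_def)
  then have "of_int (det (fst s')) = (x $ l - of_int (round_half (x $ l))) * of_int (det (fst s))"
    using det_upd_col_residual[OF cx] by (simp add: y_def ratvec_def)
  then show ?thesis
    using that sub_round_half_nz[OF nonint] abs_sub_round_half_le by blast
qed

lemma exchange_step_det_halves:
  "gea_exchange_step s s' \<Longrightarrow> 2 * \<bar>det (fst s')\<bar> \<le> \<bar>det (fst s)\<bar>"
proof (erule exchange_step_det)
  fix t :: rat
  assume "\<bar>t\<bar> \<le> 1/2" and eq: "of_int (det (fst s')) = t * of_int (det (fst s))"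
  then have "\<bar>(of_int (det (fst s')) :: rat)\<bar> \<le> 1/2 * \<bar>of_int (det (fst s))\<bar>"
    unfolding eq abs_mult by (intro mult_right_mono) auto
  then have "(of_int (2 * \<bar>det (fst s')\<bar>) :: rat) \<le> of_int \<bar>det (fst s)\<bar>"
    by simp
  then show ?thesis
    by (simp only: of_int_le_iff)
qed

lemma plain_step_fst: "gea_plain_step s s' \<Longrightarrow> fst s' = fst s"
  unfolding gea_plain_step_def by auto

lemma gea_step_det_nz:
  assumes "gea_step s s'" and "det (fst s) \<noteq> 0"
  shows "det (fst s') \<noteq> 0"
  using assms(1) unfolding gea_step_def
proof
  assume "gea_plain_step s s'"
  then show ?thesis
    using assms(2) by (metis plain_step_fst)
next
  assume "gea_exchange_step s s'"
  then obtain t :: rat where "t \<noteq> 0" "of_int (det (fst s')) = t * of_int (det (fst s))"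
    by (rule exchange_step_det)
  then show ?thesis
    using assms(2) by auto
qed

lemma gea_init_det_nz:
  fixes s :: "'d::finite gea_state"
  assumes "gea_init A s"
  shows "det (fst s) \<noteq> 0"
proof -
  obtain \<sigma> where "rank (ratmat (\<chi> i k. A $ i $ (\<sigma> k))) = CARD('d)" "fst s = (\<chi> i k. A $ i $ (\<sigma> k))"
    using assms unfolding gea_init_def by blast
  then have "det (ratmat (fst s)) \<noteq> 0"
    using det_nz_if_full_rank by metis
  then show ?thesis
    by (simp add: det_ratmat)
qed

lemma card_less_Suc_filter:
  "card {i. i < Suc m \<and> P i} = card {i. i < m \<and> P i} + (if P m then 1 else 0)"
proof -
  have "{i. i < Suc m \<and> P i} = (if P m then insert m {i. i < m \<and> P i} else {i. i < m \<and> P i})"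
    by (auto simp: less_Suc_eq)
  then show ?thesis
    by simp
qed

lemma halving_count_bound:
  fixes f :: "nat \<Rightarrow> int"
  assumes "\<And>i. i < k \<Longrightarrow> P i \<Longrightarrow> 2 * \<bar>f (Suc i)\<bar> \<le> \<bar>f i\<bar>"
    and "\<And>i. i < k \<Longrightarrow> \<not> P i \<Longrightarrow> f (Suc i) = f i"
  shows "2 ^ card {i. i < k \<and> P i} * \<bar>f k\<bar> \<le> \<bar>f 0\<bar>"
  using assms
proof (induction k)
  case 0
  then show ?case by simp
next
  case (Suc k)
  then have IH: "2 ^ card {i. i < k \<and> P i} * \<bar>f k\<bar> \<le> \<bar>f 0\<bar>"
    by simp
  show ?case
  proof (cases "P k")
    case True
    then have "2 ^ card {i. i < Suc k \<and> P i} * \<bar>f (Suc k)\<bar>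
        = 2 ^ card {i. i < k \<and> P i} * (2 * \<bar>f (Suc k)\<bar>)"
      by (simp add: card_less_Suc_filter)
    also have "\<dots> \<le> 2 ^ card {i. i < k \<and> P i} * \<bar>f k\<bar>"
      using Suc.prems(1) True by (simp add: mult_left_mono)
    finally show ?thesis
      using IH by linarith
  next
    case False
    then show ?thesis
      using IH Suc.prems(2) by (simp add: card_less_Suc_filter)
  qed
qed

lemma gea_run_det_nz:
  assumes "gea_init A (s 0)" and "\<forall>i<k. gea_step (s i) (s (Suc i))" and "i \<le> k"
  shows "det (fst (s i)) \<noteq> 0"
  using assms(3)
proof (induction i)
  case 0
  show ?case
    using assms(1) by (rule gea_init_det_nz)
next
  case (Suc i)
  then show ?case
    using assms(2) gea_step_det_nz[of "s i" "s (Suc i)"] by (simp add: Suc_le_eq)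
qed

lemma gea_run_exchange_count:
  assumes "gea_init A (s 0)" and "\<forall>i<k. gea_step (s i) (s (Suc i))"
  shows "2 ^ card {i. i < k \<and> gea_exchange_step (s i) (s (Suc i))} \<le> \<bar>det (fst (s 0))\<bar>"
proof -
  let ?d = "\<lambda>i. det (fst (s i))"
  let ?N = "card {i. i < k \<and> gea_exchange_step (s i) (s (Suc i))}"
  have "2 ^ ?N \<le> 2 ^ ?N * \<bar>?d k\<bar>"
    using gea_run_det_nz[OF assms, of k] by (simp add: mult_le_cancel_left1)
  also have "\<dots> \<le> \<bar>?d 0\<bar>"
  proof (rule halving_count_bound[where f = ?d])
    fix i
    assume "i < k" and no_exchange: "\<not> gea_exchange_step (s i) (s (Suc i))"
    then have "gea_step (s i) (s (Suc i))"
      using assms(2) by simp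
    then show "?d (Suc i) = ?d i"
      using no_exchange by (simp add: gea_step_def plain_step_fst)
  qed (rule exchange_step_det_halves)
  finally show ?thesis .
qed

theorem mainTheorem2:
  fixes A :: "int^'n::finite^'d::finite"
    and s :: "nat \<Rightarrow> 'd gea_state"
    and k :: nat
  assumes "rank (ratmat A) = CARD('d)"
    and "gea_init A (s 0)"
    and "\<forall>i<k. gea_step (s i) (s (Suc i))"
  shows "(\<forall>i<k. gea_exchange_step (s i) (s (Suc i)) \<longrightarrow>
            \<bar>real_of_int (det (fst (s (Suc i))))\<bar> \<le> \<bar>real_of_int (det (fst (s i)))\<bar> / 2)
       \<and> real (card {i. i < k \<and> gea_exchange_step (s i) (s (Suc i))})
            \<le> log 2 \<bar>real_of_int (det (fst (s 0)))\<bar>"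
proof -
  let ?N = "card {i. i < k \<and> gea_exchange_step (s i) (s (Suc i))}"
  have "real_of_int (2 ^ ?N) \<le> real_of_int \<bar>det (fst (s 0))\<bar>"
    using gea_run_exchange_count[OF assms(2,3)] by (simp only: of_int_le_iff)
  then have "(2::real) ^ ?N \<le> \<bar>real_of_int (det (fst (s 0)))\<bar>"
    by simp
  then have "real ?N \<le> log 2 \<bar>real_of_int (det (fst (s 0)))\<bar>"
    by (rule le_log_of_power) simp
  moreover have "\<forall>i<k. gea_exchange_step (s i) (s (Suc i)) \<longrightarrow>
      \<bar>real_of_int (det (fst (s (Suc i))))\<bar> \<le> \<bar>real_of_int (det (fst (s i)))\<bar> / 2"
  proof (intro allI impI)
    fix i
    assume "gea_exchange_step (s i) (s (Suc i))"
    from exchange_step_det_halves[OF this]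
    show "\<bar>real_of_int (det (fst (s (Suc i))))\<bar> \<le> \<bar>real_of_int (det (fst (s i)))\<bar> / 2"
      by linarith
  qed
  ultimately show ?thesis
    by blast
qed

end
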